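(* Let $N,\beta,\mu,\gamma>0$ with $\frac{\beta N}{\mu+\gamma}>1$ and $*:=N-\frac{\mu+\gamma}{\beta}$. For $a\in(0,N)$, $T>0$ and $\phi\in C([0,T])$ let $$I_{a,T}(\phi)=\inf\Big\{\tfrac12\int_0^T|u(s)|^2ds:\ u\in L^2([0,T]),\ \phi(t)=a+\int_0^t\phi(s)(\beta N-\mu-\gamma-\beta\phi(s))ds+\int_0^t\phi(s)(N-\phi(s))u(s)ds\ \ \forall t\in[0,T]\Big\}$$ (with $\inf\emptyset=\infty$). Let $\delta_0>0$ be sufficiently small, $m>0$, $\rho\in(0,*-\delta_0)$, and $$\overline{V}_{m,\rho}:=\inf_{T\le m}\ \inf_{\phi\in C([0,T]),\ \phi(T)=\rho} I_{*-\delta_0,T}(\phi).$$ If $\overline{V}_{m,\rho}<\infty$, then there exist $T\le m$ and a decreasing $\phi\in C([0,T])$ such that $T$ is the first time $\phi$ hits $\rho$ (i.e. $\phi(T)=\rho$ and $\phi(t)\neq\rho$ for $t<T$), $\overline{V}_{m,\rho}=I_{*-\delta_0,T}(\phi)$, and $\phi(t)\in[\rho,*-\delta_0]$ for all $t\in[0,T]$.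
   Context: $I_{a,T}$ is the large-deviation rate function associated with the SDE $dI=I([\beta N-\mu-\gamma-\beta I]dt+\sigma(N-I)dB)$ started at $a$ on the time interval $[0,T]$. *)

theory Defs
  imports "HOL-Analysis.Analysis"
begin

definition admissible_control ::
  "real \<Rightarrow> real \<Rightarrow> real \<Rightarrow> real \<Rightarrow> real \<Rightarrow> real \<Rightarrow> (real \<Rightarrow> real) \<Rightarrow> (real \<Rightarrow> real) \<Rightarrow> bool" where
  "admissible_control N \<beta> \<mu> \<gamma> a T \<phi> u \<longleftrightarrow>
     set_borel_measurable lborel {0..T} u \<and>
     set_integrable lborel {0..T} (\<lambda>s. (u s)\<^sup>2) \<and>
     (\<forall>t\<in>{0..T}. \<phi> t = a
        + (LINT s:{0..t}|lborel. \<phi> s * (\<beta> * N - \<mu> - \<gamma> - \<beta> * \<phi> s))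
        + (LINT s:{0..t}|lborel. \<phi> s * (N - \<phi> s) * u s))"

definition rate_fun ::
  "real \<Rightarrow> real \<Rightarrow> real \<Rightarrow> real \<Rightarrow> real \<Rightarrow> real \<Rightarrow> (real \<Rightarrow> real) \<Rightarrow> ereal" where
  "rate_fun N \<beta> \<mu> \<gamma> a T \<phi> =
     Inf {ereal ((1/2) * (LINT s:{0..T}|lborel. (u s)\<^sup>2)) | u.
            admissible_control N \<beta> \<mu> \<gamma> a T \<phi> u}"

definition Vbar ::
  "real \<Rightarrow> real \<Rightarrow> real \<Rightarrow> real \<Rightarrow> real \<Rightarrow> real \<Rightarrow> real \<Rightarrow> ereal" where
  "Vbar N \<beta> \<mu> \<gamma> a m \<rho> =
     Inf {rate_fun N \<beta> \<mu> \<gamma> a T \<phi> | T \<phi>.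
            0 < T \<and> T \<le> m \<and> continuous_on {0..T} \<phi> \<and> \<phi> T = \<rho>}"

end

theory Submission
  imports Defs
begin

text \<open>
  Write \<open>b(x) = x(\<beta>N - \<mu> - \<gamma> - \<beta>x)\<close> and \<open>\<sigma>(x) = x(N - x)\<close>; both are positive on
  \<open>[\<rho>, a]\<close> when \<open>0 < \<rho> < a < *\<close>. The proof is a calibration argument. For a multiplier
  \<open>c \<ge> 0\<close> put \<open>F = sqrt (b\<^sup>2 + 2c\<sigma>\<^sup>2)\<close> and let \<open>G\<close> be a potential with \<open>G' = (b + F) / \<sigma>\<^sup>2\<close>.
  Completing the square gives \<open>u\<^sup>2/2 \<ge> - G'(x) (b(x) + \<sigma>(x) u) - c\<close> for every control value
  \<open>u\<close>, with equality iff \<open>\<sigma> u = - (b + F)\<close>. Integrating this along an admissible path between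
  its last visit to \<open>a\<close> and its first visit to \<open>\<rho>\<close> shows that every path reaching \<open>\<rho>\<close> by time
  \<open>m\<close> costs at least \<open>G(a) - G(\<rho>) - cm\<close>. The equality case is the path solving
  \<open>\<phi>' = - F(\<phi>)\<close>, which falls from \<open>a\<close> to \<open>\<rho>\<close> in time \<open>\<integral>\<^sub>\<rho>\<^sup>a 1/F\<close>; choosing \<open>c\<close> so that this
  time is \<open>m\<close>, or \<open>c = 0\<close> if the unconstrained optimum is already faster, makes the bound
  attained.
\<close>

section \<open>Chain rule along absolutely continuous paths\<close>

lemma increments_dominated_imp_eq:
  fixes D H :: "real \<Rightarrow> real"
  assumes "s \<le> t"
    and small: "\<And>e. e > 0 \<Longrightarrow> \<exists>d>0. \<forall>x y. s \<le> x \<longrightarrow> x \<le> y \<longrightarrow> y \<le> t \<longrightarrow> y - x < d \<longrightarrow>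
                  \<bar>D y - D x\<bar> \<le> e * (H y - H x)"
  shows "D t = D s"
proof -
  have bound: "\<bar>D t - D s\<bar> \<le> e * (H t - H s)" if e: "e > 0" for e
  proof -
    obtain d where "d > 0" and d: "\<And>x y. s \<le> x \<Longrightarrow> x \<le> y \<Longrightarrow> y \<le> t \<Longrightarrow> y - x < d \<Longrightarrow>
        \<bar>D y - D x\<bar> \<le> e * (H y - H x)"
      using small[OF e] by blast
    obtain n :: nat where n: "(t - s) / d < n" using reals_Archimedean2 by blast
    moreover have "(t - s) / d \<ge> 0" using \<open>s \<le> t\<close> \<open>d > 0\<close> by simp
    ultimately have "n > 0" by linarith
    define w where "w = (t - s) / n"
    have w: "0 \<le> w" "w < d" "n * w = t - s"
      using n \<open>n > 0\<close> \<open>s \<le> t\<close> \<open>d > 0\<close> by (auto simp: w_def field_simps)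
    have "\<bar>D (s + j * w) - D s\<bar> \<le> e * (H (s + j * w) - H s)" if "j \<le> n" for j :: nat
      using that
    proof (induction j)
      case (Suc j)
      have "real (Suc j) * w \<le> n * w" using Suc.prems w by (intro mult_right_mono) auto
      then have "\<bar>D (s + j * w + w) - D (s + j * w)\<bar> \<le> e * (H (s + j * w + w) - H (s + j * w))"
        using w by (intro d) (auto simp: algebra_simps)
      with Suc show ?case by (simp add: algebra_simps)
    qed simp
    from this[of n] show ?thesis using w by simp
  qed
  show ?thesis
  proof (rule ccontr)
    assume "D t \<noteq> D s"
    have "H t - H s \<ge> 0" using bound[of 1] by simp
    define e where "e = \<bar>D t - D s\<bar> / (2 * (H t - H s + 1))"
    have "e > 0" using \<open>D t \<noteq> D s\<close> \<open>H t - H s \<ge> 0\<close> by (simp add: e_def)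
    have "\<bar>D t - D s\<bar> \<le> e * (H t - H s + 1)"
      using bound[OF \<open>e > 0\<close>] \<open>e > 0\<close> by (simp add: algebra_simps)
    also have "\<dots> = \<bar>D t - D s\<bar> / 2" using \<open>H t - H s \<ge> 0\<close> by (simp add: e_def field_simps)
    finally show False using \<open>D t \<noteq> D s\<close> by simp
  qed
qed

lemma mean_value_along_path:
  fixes \<psi> g G :: "real \<Rightarrow> real"
  assumes "x \<le> y" and \<psi>: "continuous_on {x..y} \<psi>"
    and range: "\<And>r. r \<in> {x..y} \<Longrightarrow> \<psi> r \<in> {p..q}"
    and G: "\<And>v. v \<in> {p..q} \<Longrightarrow> (G has_real_derivative g v) (at v within {p..q})"
  shows "\<exists>r\<in>{x..y}. G (\<psi> y) - G (\<psi> x) = g (\<psi> r) * (\<psi> y - \<psi> x)"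
proof -
  have mvt: "\<exists>z\<in>{lo..hi}. G hi - G lo = g z * (hi - lo)"
    if "lo \<le> hi" "lo \<in> {p..q}" "hi \<in> {p..q}" for lo hi
  proof (rule mvt_very_simple[OF \<open>lo \<le> hi\<close>])
    fix z assume "lo \<le> z" "z \<le> hi"
    then have "(G has_real_derivative g z) (at z within {lo..hi})"
      using G[of z] that by (auto intro: DERIV_subset)
    then show "(G has_derivative (*) (g z)) (at z within {lo..hi})"
      by (simp add: has_field_derivative_def)
  qed
  have "\<psi> x \<in> {p..q}" "\<psi> y \<in> {p..q}" using range \<open>x \<le> y\<close> by auto
  then consider "\<psi> x \<le> \<psi> y" | "\<psi> y \<le> \<psi> x" by linarith
  then show ?thesis
  proof cases
    case 1
    obtain z where z: "z \<in> {\<psi> x..\<psi> y}" "G (\<psi> y) - G (\<psi> x) = g z * (\<psi> y - \<psi> x)"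
      using mvt[OF 1 \<open>\<psi> x \<in> _\<close> \<open>\<psi> y \<in> _\<close>] by blast
    then obtain r where "r \<in> {x..y}" "\<psi> r = z" using IVT'[of \<psi> x z y] \<open>x \<le> y\<close> \<psi> by auto
    then show ?thesis using z by auto
  next
    case 2
    obtain z where z: "z \<in> {\<psi> y..\<psi> x}" "G (\<psi> x) - G (\<psi> y) = g z * (\<psi> x - \<psi> y)"
      using mvt[OF 2 \<open>\<psi> y \<in> _\<close> \<open>\<psi> x \<in> _\<close>] by blast
    then obtain r where "r \<in> {x..y}" "\<psi> r = z" using IVT2'[of \<psi> y z x] \<open>x \<le> y\<close> \<psi> by auto
    then show ?thesis using z by (intro bexI[of _ r]) (auto simp: algebra_simps)
  qed
qed

lemma chain_rule_increment_estimate: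
  fixes \<psi> h g G :: "real \<Rightarrow> real"
  assumes "x \<le> y" and \<psi>: "continuous_on {x..y} \<psi>"
    and range: "\<And>r. r \<in> {x..y} \<Longrightarrow> \<psi> r \<in> {p..q}"
    and G: "\<And>v. v \<in> {p..q} \<Longrightarrow> (G has_real_derivative g v) (at v within {p..q})"
    and \<psi>_incr: "\<psi> y - \<psi> x = integral {x..y} h"
    and h: "h integrable_on {x..y}" "(\<lambda>r. \<bar>h r\<bar>) integrable_on {x..y}"
    and gh: "(\<lambda>r. g (\<psi> r) * h r) integrable_on {x..y}"
    and osc: "\<And>r r'. r \<in> {x..y} \<Longrightarrow> r' \<in> {x..y} \<Longrightarrow> \<bar>g (\<psi> r) - g (\<psi> r')\<bar> \<le> e"
  shows "\<bar>G (\<psi> y) - G (\<psi> x) - integral {x..y} (\<lambda>r. g (\<psi> r) * h r)\<bar> \<le> e * integral {x..y} (\<lambda>r. \<bar>h r\<bar>)"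
proof -
  obtain r0 where r0: "r0 \<in> {x..y}" "G (\<psi> y) - G (\<psi> x) = g (\<psi> r0) * (\<psi> y - \<psi> x)"
    using mean_value_along_path[OF \<open>x \<le> y\<close> \<psi> range G] by blast
  have diff_integrable: "(\<lambda>r. g (\<psi> r0) * h r - g (\<psi> r) * h r) integrable_on {x..y}"
    using integrable_on_cmult_left[OF h(1), of "g (\<psi> r0)"] gh by (auto intro: integrable_diff)
  have "G (\<psi> y) - G (\<psi> x) - integral {x..y} (\<lambda>r. g (\<psi> r) * h r)
        = integral {x..y} (\<lambda>r. g (\<psi> r0) * h r - g (\<psi> r) * h r)"
    using r0(2) gh integrable_on_cmult_left[OF h(1), of "g (\<psi> r0)"] by (simp add: \<psi>_incr integral_diff)
  also have "\<bar>\<dots>\<bar> \<le> integral {x..y} (\<lambda>r. e * \<bar>h r\<bar>)"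
    using integral_norm_bound_integral[OF diff_integrable integrable_on_cmult_left[OF h(2)]] osc r0(1)
    by (fastforce simp flip: left_diff_distrib simp: abs_mult intro: mult_right_mono)
  finally show ?thesis by simp
qed

lemma integral_combine_within:
  fixes f :: "real \<Rightarrow> real"
  assumes "f integrable_on {s..t}" "s \<le> x" "x \<le> y" "y \<le> t"
  shows "integral {s..x} f + integral {x..y} f = integral {s..y} f"
  by (rule Henstock_Kurzweil_Integration.integral_combine)
    (use assms integrable_subinterval_real[OF assms(1)] in auto)

lemma continuous_times_absolutely_integrable:
  fixes k h :: "real \<Rightarrow> real"
  assumes "continuous_on {s..t} k" "h absolutely_integrable_on {s..t}"
  shows "(\<lambda>r. k r * h r) absolutely_integrable_on {s..t}"
  by (rule absolutely_integrable_bounded_measurable_product_real[OF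
        continuous_imp_measurable_on_sets_lebesgue[OF assms(1)] _
        compact_imp_bounded[OF compact_continuous_image[OF assms(1) compact_Icc]] assms(2)]) auto

text \<open>Since \<open>\<psi>\<close> is only absolutely continuous, the chain rule is proved without differentiating
  \<open>\<psi>\<close>: by uniform continuity of \<open>g \<circ> \<psi>\<close>, the increments of \<open>G \<circ> \<psi> - \<integral> (g \<circ> \<psi>) h\<close> over short
  intervals are \<open>o(\<integral>|h|)\<close>, so this function is constant.\<close>

lemma chain_rule_indefinite_integral:
  fixes \<psi> h g G :: "real \<Rightarrow> real"
  assumes "s \<le> t" and \<psi>: "continuous_on {s..t} \<psi>"
    and range: "\<And>r. r \<in> {s..t} \<Longrightarrow> \<psi> r \<in> {p..q}"
    and h: "h absolutely_integrable_on {s..t}"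
    and \<psi>_eq: "\<And>r. r \<in> {s..t} \<Longrightarrow> \<psi> r = \<psi> s + integral {s..r} h"
    and G: "\<And>v. v \<in> {p..q} \<Longrightarrow> (G has_real_derivative g v) (at v within {p..q})"
    and g: "continuous_on {p..q} g"
  shows "G (\<psi> t) - G (\<psi> s) = integral {s..t} (\<lambda>r. g (\<psi> r) * h r)"
proof -
  have g\<psi>: "continuous_on {s..t} (\<lambda>r. g (\<psi> r))"
    using continuous_on_compose2[OF g \<psi>] range by blast
  have "(\<lambda>r. g (\<psi> r) * h r) absolutely_integrable_on {s..t}"
    by (rule continuous_times_absolutely_integrable[OF g\<psi> h])
  then have gh: "(\<lambda>r. g (\<psi> r) * h r) integrable_on {s..t}"
    and h_int: "h integrable_on {s..t}" "(\<lambda>r. \<bar>h r\<bar>) integrable_on {s..t}"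
    using h by (simp_all add: absolutely_integrable_on_def)
  define D where "D r = G (\<psi> r) - integral {s..r} (\<lambda>r. g (\<psi> r) * h r)" for r
  define H where "H r = integral {s..r} (\<lambda>r. \<bar>h r\<bar>)" for r
  have "D t = D s"
  proof (rule increments_dominated_imp_eq[OF \<open>s \<le> t\<close>])
    fix e :: real assume "e > 0"
    obtain d where "d > 0" and d: "\<And>r r'. r \<in> {s..t} \<Longrightarrow> r' \<in> {s..t} \<Longrightarrow> dist r' r < d \<Longrightarrow>
        dist (g (\<psi> r')) (g (\<psi> r)) < e"
      using compact_uniformly_continuous[OF g\<psi> compact_Icc] \<open>e > 0\<close>
      unfolding uniformly_continuous_on_def by metis
    show "\<exists>d>0. \<forall>x y. s \<le> x \<longrightarrow> x \<le> y \<longrightarrow> y \<le> t \<longrightarrow> y - x < d \<longrightarrow>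
            \<bar>D y - D x\<bar> \<le> e * (H y - H x)"
    proof (intro exI[of _ d] conjI allI impI \<open>d > 0\<close>)
      fix x y assume xy: "s \<le> x" "x \<le> y" "y \<le> t" "y - x < d"
      have sub: "{x..y} \<subseteq> {s..t}" using xy by auto
      have "\<bar>G (\<psi> y) - G (\<psi> x) - integral {x..y} (\<lambda>r. g (\<psi> r) * h r)\<bar>
            \<le> e * integral {x..y} (\<lambda>r. \<bar>h r\<bar>)"
      proof (rule chain_rule_increment_estimate[OF \<open>x \<le> y\<close> continuous_on_subset[OF \<psi> sub] _ G])
        show "\<psi> y - \<psi> x = integral {x..y} h"
          using \<psi>_eq[of x] \<psi>_eq[of y] integral_combine_within[OF h_int(1) xy(1-3)] xy by auto
        show "\<bar>g (\<psi> r) - g (\<psi> r')\<bar> \<le> e" if "r \<in> {x..y}" "r' \<in> {x..y}" for r r'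
          using d[of r' r] that sub xy by (force simp: dist_real_def)
      qed (use range sub integrable_subinterval_real[OF _ sub] gh h_int in auto)
      moreover have "D y - D x = G (\<psi> y) - G (\<psi> x) - integral {x..y} (\<lambda>r. g (\<psi> r) * h r)"
        using integral_combine_within[OF gh xy(1-3)] by (simp add: D_def)
      moreover have "H y - H x = integral {x..y} (\<lambda>r. \<bar>h r\<bar>)"
        using integral_combine_within[OF h_int(2) xy(1-3)] by (simp add: H_def)
      ultimately show "\<bar>D y - D x\<bar> \<le> e * (H y - H x)" by simp
    qed
  qed
  then show ?thesis by (simp add: D_def)
qed

section \<open>A decreasing solution of an autonomous equation\<close>

lemma primitive_of_positive_strict_mono_on:
  fixes f :: "real \<Rightarrow> real"
  assumes f: "continuous_on {\<rho>..a} f" "\<And>y. y \<in> {\<rho>..a} \<Longrightarrow> f y > 0"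
  shows "strict_mono_on {\<rho>..a} (\<lambda>x. integral {\<rho>..x} f)"
proof (rule strict_mono_onI)
  fix x y assume xy: "x \<in> {\<rho>..a}" "y \<in> {\<rho>..a}" "x < y"
  show "integral {\<rho>..x} f < integral {\<rho>..y} f"
  proof (rule DERIV_pos_imp_increasing_open[OF \<open>x < y\<close>])
    fix z assume "x < z" "z < y"
    then have "\<rho> < z" "z < a" using xy by auto
    then have "((\<lambda>x. integral {\<rho>..x} f) has_real_derivative f z) (at z)"
      using integral_has_real_derivative[OF f(1), of z] at_within_Icc_at[of \<rho> z a] by simp
    then show "\<exists>d. ((\<lambda>x. integral {\<rho>..x} f) has_real_derivative d) (at z) \<and> d > 0"
      using f(2)[of z] \<open>\<rho> < z\<close> \<open>z < a\<close> by auto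
  next
    show "continuous_on {x..y} (\<lambda>x. integral {\<rho>..x} f)"
      using indefinite_integral_continuous_1[OF integrable_continuous_real[OF f(1)]] xy
      by (auto intro: continuous_on_subset)
  qed
qed

lemma inverse_of_primitive:
  fixes f :: "real \<Rightarrow> real"
  assumes "\<rho> < a" and f: "continuous_on {\<rho>..a} f" "\<And>y. y \<in> {\<rho>..a} \<Longrightarrow> f y > 0"
  defines "T \<equiv> integral {\<rho>..a} f"
  obtains \<eta> where "0 < T" "continuous_on {0..T} \<eta>" "\<eta> 0 = \<rho>" "\<eta> T = a"
    "\<And>y. y \<in> {0..T} \<Longrightarrow> \<eta> y \<in> {\<rho>..a}" "strict_mono_on {0..T} \<eta>"
    "\<And>y. 0 < y \<Longrightarrow> y < T \<Longrightarrow> (\<eta> has_real_derivative 1 / f (\<eta> y)) (at y)"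
proof -
  define \<Theta> where "\<Theta> = (\<lambda>x. integral {\<rho>..x} f)"
  have mono: "strict_mono_on {\<rho>..a} \<Theta>"
    unfolding \<Theta>_def by (rule primitive_of_positive_strict_mono_on[OF f])
  have \<Theta>_cont: "continuous_on {\<rho>..a} \<Theta>"
    unfolding \<Theta>_def using indefinite_integral_continuous_1[OF integrable_continuous_real[OF f(1)]] .
  have \<Theta>_ends: "\<Theta> \<rho> = 0" "\<Theta> a = T" by (simp_all add: \<Theta>_def T_def)
  with strict_mono_onD[OF mono, of \<rho> a] \<open>\<rho> < a\<close> have "0 < T" by simp
  have image: "\<Theta> ` {\<rho>..a} = {0..T}"
  proof
    show "\<Theta> ` {\<rho>..a} \<subseteq> {0..T}"
      using strict_mono_on_leD[OF mono] \<Theta>_ends by fastforce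
    show "{0..T} \<subseteq> \<Theta> ` {\<rho>..a}"
      using IVT'[of \<Theta> \<rho> _ a] \<Theta>_ends \<open>\<rho> < a\<close> \<Theta>_cont by fastforce
  qed
  have inj: "inj_on \<Theta> {\<rho>..a}" by (rule strict_mono_on_imp_inj_on[OF mono])
  define \<eta> where "\<eta> = inv_into {\<rho>..a} \<Theta>"
  have \<eta>_\<Theta>: "\<eta> (\<Theta> x) = x" if "x \<in> {\<rho>..a}" for x
    unfolding \<eta>_def using inv_into_f_f[OF inj that] .
  have \<Theta>_\<eta>: "\<Theta> (\<eta> y) = y" and \<eta>_range: "\<eta> y \<in> {\<rho>..a}" if "y \<in> {0..T}" for y
    unfolding \<eta>_def using f_inv_into_f[of y \<Theta> "{\<rho>..a}"] inv_into_into[of y \<Theta> "{\<rho>..a}"] image that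
    by auto
  have \<eta>_cont: "continuous_on {0..T} \<eta>"
    using continuous_on_inv[OF \<Theta>_cont compact_Icc] \<eta>_\<Theta> image by simp
  have \<eta>_mono: "strict_mono_on {0..T} \<eta>"
  proof (rule strict_mono_onI)
    fix x y assume "x \<in> {0..T}" "y \<in> {0..T}" "x < y"
    then show "\<eta> x < \<eta> y"
      using strict_mono_on_leD[OF mono \<eta>_range \<eta>_range, of y x] \<Theta>_\<eta> by force
  qed
  have \<eta>_ends: "\<eta> 0 = \<rho>" "\<eta> T = a" using \<eta>_\<Theta>[of \<rho>] \<eta>_\<Theta>[of a] \<Theta>_ends \<open>\<rho> < a\<close> by auto
  have "(\<eta> has_real_derivative 1 / f (\<eta> y)) (at y)" if y: "0 < y" "y < T" for y
  proof -
    have "\<rho> < \<eta> y" "\<eta> y < a"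
      using strict_mono_onD[OF \<eta>_mono, of 0 y] strict_mono_onD[OF \<eta>_mono, of y T] y \<eta>_ends by auto
    then have "(\<Theta> has_real_derivative f (\<eta> y)) (at (\<eta> y))"
      using integral_has_real_derivative[OF f(1), of "\<eta> y"] at_within_Icc_at[of \<rho> "\<eta> y" a]
      by (simp add: \<Theta>_def)
    moreover have "f (\<eta> y) \<noteq> 0" using f(2)[of "\<eta> y"] \<open>\<rho> < \<eta> y\<close> \<open>\<eta> y < a\<close> by simp
    moreover have "isCont \<eta> y" using continuous_on_interior[OF \<eta>_cont, of y] y by simp
    ultimately show ?thesis
      using DERIV_inverse_function[where f = \<Theta> and g = \<eta> and x = y and a = 0 and b = T] y \<Theta>_\<eta>
      by (simp add: inverse_eq_divide)
  qed
  with that \<open>0 < T\<close> \<eta>_cont \<eta>_ends \<eta>_range \<eta>_mono show ?thesis by blast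
qed

lemma decreasing_solution_of_autonomous_ode:
  fixes F :: "real \<Rightarrow> real"
  assumes "\<rho> < a" and F: "continuous_on {\<rho>..a} F" "\<And>y. y \<in> {\<rho>..a} \<Longrightarrow> F y > 0"
  defines "T \<equiv> integral {\<rho>..a} (\<lambda>y. 1 / F y)"
  obtains \<phi> where "0 < T" "continuous_on {0..T} \<phi>" "\<phi> 0 = a" "\<phi> T = \<rho>"
    "\<And>t. t \<in> {0..T} \<Longrightarrow> \<phi> t \<in> {\<rho>..a}" "strict_antimono_on {0..T} \<phi>"
    "\<And>t. t \<in> {0..T} \<Longrightarrow> ((\<lambda>r. - F (\<phi> r)) has_integral (\<phi> t - a)) {0..t}"
proof -
  have "continuous_on {\<rho>..a} (\<lambda>y. 1 / F y)" "\<And>y. y \<in> {\<rho>..a} \<Longrightarrow> 1 / F y > 0"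
    using F by (force intro!: continuous_intros)+
  then obtain \<eta> where "0 < T" and \<eta>: "continuous_on {0..T} \<eta>" "\<eta> 0 = \<rho>" "\<eta> T = a"
    "\<And>y. y \<in> {0..T} \<Longrightarrow> \<eta> y \<in> {\<rho>..a}" "strict_mono_on {0..T} \<eta>"
    "\<And>y. 0 < y \<Longrightarrow> y < T \<Longrightarrow> (\<eta> has_real_derivative F (\<eta> y)) (at y)"
    using inverse_of_primitive[OF \<open>\<rho> < a\<close>, of "\<lambda>y. 1 / F y"] unfolding T_def by auto
  define \<phi> where "\<phi> = (\<lambda>t. \<eta> (T - t))"
  have \<phi>_cont: "continuous_on {0..T} \<phi>"
    unfolding \<phi>_def by (rule continuous_on_compose2[OF \<eta>(1)]) (auto intro!: continuous_intros)
  have "strict_antimono_on {0..T} \<phi>"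
    by (rule monotone_onI) (auto simp: \<phi>_def intro!: strict_mono_onD[OF \<eta>(5)])
  moreover have "((\<lambda>r. - F (\<phi> r)) has_integral (\<phi> t - a)) {0..t}" if "t \<in> {0..T}" for t
  proof -
    have "((\<lambda>r. - F (\<phi> r)) has_integral (\<phi> t - \<phi> 0)) {0..t}"
    proof (rule fundamental_theorem_of_calculus_interior)
      show "continuous_on {0..t} \<phi>" using \<phi>_cont that by (auto intro: continuous_on_subset)
      fix r assume "r \<in> {0<..<t}"
      then have "((\<lambda>r. \<eta> (T - r)) has_real_derivative F (\<eta> (T - r)) * - 1) (at r)"
        using that by (intro DERIV_chain2[OF \<eta>(6)] derivative_eq_intros) auto
      then show "(\<phi> has_vector_derivative - F (\<phi> r)) (at r)"
        by (simp add: \<phi>_def has_real_derivative_iff_has_vector_derivative)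
    qed (use that in simp)
    then show ?thesis using \<eta>(3) by (simp add: \<phi>_def)
  qed
  ultimately show ?thesis
    using that \<open>0 < T\<close> \<phi>_cont \<eta>(2-4) by (auto simp: \<phi>_def)
qed

section \<open>The travel time as a function of the multiplier\<close>

definition travel_time :: "(real \<Rightarrow> real) \<Rightarrow> (real \<Rightarrow> real) \<Rightarrow> real \<Rightarrow> real \<Rightarrow> real \<Rightarrow> real" where
  "travel_time b \<sigma> \<rho> a c = integral {\<rho>..a} (\<lambda>y. 1 / sqrt ((b y)\<^sup>2 + 2 * c * (\<sigma> y)\<^sup>2))"

lemma inverse_diff_le:
  fixes p q m :: real
  assumes "m > 0" "m \<le> p" "m \<le> q"
  shows "\<bar>1 / p - 1 / q\<bar> \<le> \<bar>q\<^sup>2 - p\<^sup>2\<bar> / (2 * m ^ 3)"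
proof -
  have "p > 0" "q > 0" using assms by auto
  have "(2 * m) * (m * m) \<le> (q + p) * (p * q)"
    using assms by (intro mult_mono) auto
  then have denominator: "2 * m ^ 3 \<le> (q + p) * (p * q)"
    by (simp add: power3_eq_cube algebra_simps)
  have "1 / p - 1 / q = (q\<^sup>2 - p\<^sup>2) / ((q + p) * (p * q))"
    using \<open>p > 0\<close> \<open>q > 0\<close> by (simp add: divide_simps) (simp add: algebra_simps power2_eq_square)
  then have "\<bar>1 / p - 1 / q\<bar> = \<bar>q\<^sup>2 - p\<^sup>2\<bar> / ((q + p) * (p * q))"
    using \<open>p > 0\<close> \<open>q > 0\<close> by (simp add: abs_divide)
  also have "\<dots> \<le> \<bar>q\<^sup>2 - p\<^sup>2\<bar> / (2 * m ^ 3)"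
    using denominator \<open>m > 0\<close> \<open>p > 0\<close> \<open>q > 0\<close> by (intro divide_left_mono) auto
  finally show ?thesis .
qed

lemma travel_time_lipschitz:
  assumes b: "continuous_on {\<rho>..a} b" and \<sigma>: "continuous_on {\<rho>..a} \<sigma>"
    and "bm > 0" and b_ge: "\<And>y. y \<in> {\<rho>..a} \<Longrightarrow> bm \<le> b y"
    and \<sigma>_le: "\<And>y. y \<in> {\<rho>..a} \<Longrightarrow> \<bar>\<sigma> y\<bar> \<le> sM" and "\<rho> \<le> a"
  shows "(sM\<^sup>2 / bm ^ 3 * (a - \<rho>))-lipschitz_on {0..} (travel_time b \<sigma> \<rho> a)"
proof (rule lipschitz_onI)
  show "0 \<le> sM\<^sup>2 / bm ^ 3 * (a - \<rho>)" using \<open>bm > 0\<close> \<open>\<rho> \<le> a\<close> by simp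
  define f where "f = (\<lambda>c y. 1 / sqrt ((b y)\<^sup>2 + 2 * c * (\<sigma> y)\<^sup>2))"
  have travel_time_f: "travel_time b \<sigma> \<rho> a c = integral {\<rho>..a} (f c)" for c
    by (simp add: travel_time_def f_def)
  have sqrt_ge: "bm \<le> sqrt ((b y)\<^sup>2 + 2 * c * (\<sigma> y)\<^sup>2)" if "y \<in> {\<rho>..a}" "c \<ge> 0" for y c
  proof (rule real_le_rsqrt)
    have "bm\<^sup>2 \<le> (b y)\<^sup>2" using b_ge[OF that(1)] \<open>bm > 0\<close> by (intro power_mono) auto
    then show "bm\<^sup>2 \<le> (b y)\<^sup>2 + 2 * c * (\<sigma> y)\<^sup>2" using that(2) by (simp add: add_increasing2)
  qed
  have integrable: "f c integrable_on {\<rho>..a}" if "c \<ge> 0" for c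
    unfolding f_def using sqrt_ge[OF _ that] \<open>bm > 0\<close>
    by (intro integrable_continuous_real continuous_intros b \<sigma>) force
  fix c c' :: real assume "c \<in> {0..}" "c' \<in> {0..}"
  then have "c \<ge> 0" "c' \<ge> 0" by auto
  have pointwise: "norm (f c y - f c' y) \<le> sM\<^sup>2 / bm ^ 3 * \<bar>c - c'\<bar>" if y: "y \<in> {\<rho>..a}" for y
  proof -
    have "\<bar>f c y - f c' y\<bar> \<le> \<bar>2 * (c' - c) * (\<sigma> y)\<^sup>2\<bar> / (2 * bm ^ 3)"
      using inverse_diff_le[OF \<open>bm > 0\<close> sqrt_ge[OF y \<open>c \<ge> 0\<close>] sqrt_ge[OF y \<open>c' \<ge> 0\<close>]]
        \<open>c \<ge> 0\<close> \<open>c' \<ge> 0\<close> by (simp add: f_def algebra_simps)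
    also have "\<dots> = \<bar>c - c'\<bar> * (\<sigma> y)\<^sup>2 / bm ^ 3"
      by (simp only: abs_mult) (simp add: abs_minus_commute)
    also have "\<dots> \<le> \<bar>c - c'\<bar> * sM\<^sup>2 / bm ^ 3"
      using power_mono[OF \<sigma>_le[OF y] abs_ge_zero, of 2] \<open>bm > 0\<close>
      by (intro divide_right_mono mult_left_mono) auto
    finally show ?thesis by (simp add: mult.commute)
  qed
  have "dist (travel_time b \<sigma> \<rho> a c) (travel_time b \<sigma> \<rho> a c')
        = norm (integral {\<rho>..a} (\<lambda>y. f c y - f c' y))"
    using integrable[OF \<open>c \<ge> 0\<close>] integrable[OF \<open>c' \<ge> 0\<close>]
    by (simp add: travel_time_f dist_norm integral_diff)
  also have "\<dots> \<le> integral {\<rho>..a} (\<lambda>y. sM\<^sup>2 / bm ^ 3 * \<bar>c - c'\<bar>)"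
    using integrable[OF \<open>c \<ge> 0\<close>] integrable[OF \<open>c' \<ge> 0\<close>] pointwise
    by (intro integral_norm_bound_integral integrable_diff) auto
  finally show "dist (travel_time b \<sigma> \<rho> a c) (travel_time b \<sigma> \<rho> a c')
      \<le> sM\<^sup>2 / bm ^ 3 * (a - \<rho>) * dist c c'"
    using \<open>\<rho> \<le> a\<close> by (simp add: dist_real_def mult_ac)
qed

lemma travel_time_le_for_large_multiplier:
  assumes "\<rho> < a" "m > 0" and b: "continuous_on {\<rho>..a} b" and \<sigma>: "continuous_on {\<rho>..a} \<sigma>"
    and "sm > 0" and \<sigma>_ge: "\<And>y. y \<in> {\<rho>..a} \<Longrightarrow> sm \<le> \<sigma> y"
  shows "travel_time b \<sigma> \<rho> a (((a - \<rho>) / (m * sm))\<^sup>2) \<le> m"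
proof -
  define C where "C = ((a - \<rho>) / (m * sm))\<^sup>2"
  have speed: "(a - \<rho>) / m \<le> sqrt ((b y)\<^sup>2 + 2 * C * (\<sigma> y)\<^sup>2)" if y: "y \<in> {\<rho>..a}" for y
  proof (rule real_le_rsqrt)
    have "((a - \<rho>) / m)\<^sup>2 = C * sm\<^sup>2" using \<open>sm > 0\<close> \<open>m > 0\<close> by (simp add: C_def field_simps)
    also have "\<dots> \<le> C * (\<sigma> y)\<^sup>2"
      using \<sigma>_ge[OF y] \<open>sm > 0\<close> by (intro mult_left_mono power_mono) (auto simp: C_def)
    also have "\<dots> \<le> (b y)\<^sup>2 + 2 * C * (\<sigma> y)\<^sup>2"
      using zero_le_power2[of "b y"] by (simp add: C_def)
    finally show "((a - \<rho>) / m)\<^sup>2 \<le> (b y)\<^sup>2 + 2 * C * (\<sigma> y)\<^sup>2" .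
  qed
  have pos: "(a - \<rho>) / m > 0" using assms by simp
  have "travel_time b \<sigma> \<rho> a C \<le> integral {\<rho>..a} (\<lambda>y. m / (a - \<rho>))"
    unfolding travel_time_def
  proof (rule integral_le)
    show "(\<lambda>y. 1 / sqrt ((b y)\<^sup>2 + 2 * C * (\<sigma> y)\<^sup>2)) integrable_on {\<rho>..a}"
      using speed pos by (intro integrable_continuous_real continuous_intros b \<sigma>) force
    show "1 / sqrt ((b y)\<^sup>2 + 2 * C * (\<sigma> y)\<^sup>2) \<le> m / (a - \<rho>)" if "y \<in> {\<rho>..a}" for y
      using frac_le[of 1 1 "(a - \<rho>) / m", OF _ _ pos speed[OF that]] by simp
  qed auto
  also have "\<dots> = m" using \<open>\<rho> < a\<close> by simp
  finally show ?thesis by (simp add: C_def)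
qed

lemma exists_time_multiplier:
  assumes "\<rho> < a" "m > 0"
    and b: "continuous_on {\<rho>..a} b" "\<And>y. y \<in> {\<rho>..a} \<Longrightarrow> b y > 0"
    and \<sigma>: "continuous_on {\<rho>..a} \<sigma>" "\<And>y. y \<in> {\<rho>..a} \<Longrightarrow> \<sigma> y > 0"
  obtains c where "c \<ge> 0" "travel_time b \<sigma> \<rho> a c \<le> m" "c = 0 \<or> travel_time b \<sigma> \<rho> a c = m"
proof -
  obtain y1 where "y1 \<in> {\<rho>..a}" and b_min: "\<And>y. y \<in> {\<rho>..a} \<Longrightarrow> b y1 \<le> b y"
    using continuous_attains_inf[OF compact_Icc _ b(1)] \<open>\<rho> < a\<close> by auto
  obtain y2 where "y2 \<in> {\<rho>..a}" and \<sigma>_min: "\<And>y. y \<in> {\<rho>..a} \<Longrightarrow> \<sigma> y2 \<le> \<sigma> y"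
    using continuous_attains_inf[OF compact_Icc _ \<sigma>(1)] \<open>\<rho> < a\<close> by auto
  obtain y3 where \<sigma>_max: "\<forall>y\<in>{\<rho>..a}. \<sigma> y \<le> \<sigma> y3"
    using continuous_attains_sup[OF compact_Icc _ \<sigma>(1)] \<open>\<rho> < a\<close> by auto
  have "\<bar>\<sigma> y\<bar> \<le> \<sigma> y3" if "y \<in> {\<rho>..a}" for y
    using \<sigma>(2)[OF that] \<sigma>_max that by auto
  then have "continuous_on {0..} (travel_time b \<sigma> \<rho> a)"
    using b(2)[OF \<open>y1 \<in> _\<close>] b_min \<open>\<rho> < a\<close>
    by (intro lipschitz_on_continuous_on[of "(\<sigma> y3)\<^sup>2 / (b y1) ^ 3 * (a - \<rho>)"]
        travel_time_lipschitz[OF b(1) \<sigma>(1)]) auto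
  define C where "C = ((a - \<rho>) / (m * \<sigma> y2))\<^sup>2"
  have "travel_time b \<sigma> \<rho> a C \<le> m"
    unfolding C_def using \<sigma>(2)[OF \<open>y2 \<in> _\<close>] \<sigma>_min
    by (intro travel_time_le_for_large_multiplier[OF assms(1,2) b(1) \<sigma>(1)]) auto
  show ?thesis
  proof (cases "travel_time b \<sigma> \<rho> a 0 \<le> m")
    case True
    with that show ?thesis by auto
  next
    case False
    moreover have "C \<ge> 0" by (simp add: C_def)
    ultimately obtain c where "0 \<le> c" "c \<le> C" "travel_time b \<sigma> \<rho> a c = m"
      using IVT2'[of "travel_time b \<sigma> \<rho> a" C m 0] \<open>travel_time b \<sigma> \<rho> a C \<le> m\<close>
        continuous_on_subset[OF \<open>continuous_on {0..} _\<close>, of "{0..C}"] by force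
    with that show ?thesis by auto
  qed
qed

section \<open>Hitting times\<close>

lemma first_hitting_time:
  fixes \<psi> :: "real \<Rightarrow> real"
  assumes "x \<le> y" and \<psi>: "continuous_on {x..y} \<psi>" and "\<rho> < \<psi> x" "\<psi> y \<le> \<rho>"
  obtains \<tau> where "\<tau> \<in> {x<..y}" "\<psi> \<tau> = \<rho>" "\<And>r. r \<in> {x..<\<tau>} \<Longrightarrow> \<rho> < \<psi> r"
proof -
  define K where "K = {x..y} \<inter> \<psi> -` {..\<rho>}"
  have "closed K" unfolding K_def by (rule continuous_closed_preimage[OF \<psi>]) auto
  have "y \<in> K" "bdd_below K" using assms by (auto simp: K_def intro: bdd_belowI[of _ x])
  define \<tau> where "\<tau> = Inf K"
  have "\<tau> \<in> K" unfolding \<tau>_def using closed_contains_Inf[OF _ \<open>bdd_below K\<close> \<open>closed K\<close>] \<open>y \<in> K\<close> by auto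
  then have "\<tau> \<in> {x..y}" "\<psi> \<tau> \<le> \<rho>" by (auto simp: K_def)
  have before: "\<rho> < \<psi> r" if "r \<in> {x..<\<tau>}" for r
    using cInf_lower[OF _ \<open>bdd_below K\<close>, of r] that \<open>\<tau> \<in> {x..y}\<close> by (force simp: K_def \<tau>_def)
  obtain r where r: "r \<in> {x..\<tau>}" "\<psi> r = \<rho>"
    using IVT2'[of \<psi> \<tau> \<rho> x] \<open>\<psi> \<tau> \<le> \<rho>\<close> \<open>\<rho> < \<psi> x\<close> \<open>\<tau> \<in> {x..y}\<close>
      continuous_on_subset[OF \<psi>, of "{x..\<tau>}"] by auto
  with before have "r = \<tau>" by force
  with r have "\<psi> \<tau> = \<rho>" by simp
  moreover have "\<tau> \<noteq> x" using \<open>\<psi> \<tau> = \<rho>\<close> \<open>\<rho> < \<psi> x\<close> by auto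
  ultimately show ?thesis using that[of \<tau>] before \<open>\<tau> \<in> {x..y}\<close> by auto
qed

lemma last_exit_time:
  fixes \<psi> :: "real \<Rightarrow> real"
  assumes "x \<le> y" and \<psi>: "continuous_on {x..y} \<psi>" and "a \<le> \<psi> x" "\<psi> y < a"
  obtains s where "s \<in> {x..<y}" "\<psi> s = a" "\<And>r. r \<in> {s<..y} \<Longrightarrow> \<psi> r < a"
proof -
  have "continuous_on {x..y} (\<lambda>r. - \<psi> (x + y - r))"
    by (intro continuous_intros continuous_on_compose2[OF \<psi>]) auto
  then obtain \<tau> where "\<tau> \<in> {x<..y}" "- \<psi> (x + y - \<tau>) = - a"
    and after: "\<And>r. r \<in> {x..<\<tau>} \<Longrightarrow> - a < - \<psi> (x + y - r)"
    using first_hitting_time[of x y "\<lambda>r. - \<psi> (x + y - r)" "- a"] assms by auto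
  show ?thesis
  proof (rule that[of "x + y - \<tau>"])
    fix r assume "r \<in> {x + y - \<tau><..y}"
    then show "\<psi> r < a" using after[of "x + y - r"] by auto
  qed (use \<open>\<tau> \<in> _\<close> \<open>- \<psi> (x + y - \<tau>) = - a\<close> in auto)
qed

lemma crossing_interval:
  fixes \<psi> :: "real \<Rightarrow> real"
  assumes "0 \<le> T" and \<psi>: "continuous_on {0..T} \<psi>" and "\<psi> 0 = a" "\<psi> T = \<rho>" "\<rho> < a"
  obtains s \<tau> where "0 \<le> s" "s < \<tau>" "\<tau> \<le> T" "\<psi> s = a" "\<psi> \<tau> = \<rho>"
    "\<And>r. r \<in> {s..\<tau>} \<Longrightarrow> \<psi> r \<in> {\<rho>..a}"
proof -
  obtain \<tau> where \<tau>: "\<tau> \<in> {0<..T}" "\<psi> \<tau> = \<rho>" and above: "\<And>r. r \<in> {0..<\<tau>} \<Longrightarrow> \<rho> < \<psi> r"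
    using first_hitting_time[OF \<open>0 \<le> T\<close> \<psi>, of \<rho>] assms by auto
  obtain s where s: "s \<in> {0..<\<tau>}" "\<psi> s = a" and below: "\<And>r. r \<in> {s<..\<tau>} \<Longrightarrow> \<psi> r < a"
    using last_exit_time[of 0 \<tau> \<psi> a] continuous_on_subset[OF \<psi>, of "{0..\<tau>}"] \<tau> assms by auto
  have "\<psi> r \<in> {\<rho>..a}" if "r \<in> {s..\<tau>}" for r
  proof -
    have "\<rho> \<le> \<psi> r" using above[of r] that s \<tau> by (cases "r = \<tau>") auto
    moreover have "\<psi> r \<le> a" using below[of r] that s by (cases "r = s") auto
    ultimately show ?thesis by simp
  qed
  with that s \<tau> show ?thesis by auto
qed

lemma set_integrable_lborel_imp_absolutely_integrable:
  fixes f :: "real \<Rightarrow> real"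
  assumes "set_integrable lborel S f"
  shows "f absolutely_integrable_on S"
  using set_borel_integral_eq_integral(1)[OF assms]
    set_borel_integral_eq_integral(1)[OF set_integrable_abs[OF assms]]
  by (simp add: absolutely_integrable_on_def)

lemma set_borel_measurable_times:
  fixes f g :: "real \<Rightarrow> real"
  assumes "set_borel_measurable M A f" "set_borel_measurable M A g"
  shows "set_borel_measurable M A (\<lambda>x. f x * g x)"
proof -
  have "(\<lambda>x. (indicator A x *\<^sub>R f x) * (indicator A x *\<^sub>R g x)) \<in> borel_measurable M"
    using assms unfolding set_borel_measurable_def by measurable
  moreover have "(\<lambda>x. (indicator A x *\<^sub>R f x) * (indicator A x *\<^sub>R g x)) = (\<lambda>x. indicator A x *\<^sub>R (f x * g x))"
    by (auto simp: indicator_def)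
  ultimately show ?thesis unfolding set_borel_measurable_def by simp
qed

lemma set_integrable_continuous_times_square_integrable:
  fixes k u :: "real \<Rightarrow> real"
  assumes k: "continuous_on {s..t} k" and u: "set_borel_measurable lborel {s..t} u"
    and u2: "set_integrable lborel {s..t} (\<lambda>r. (u r)\<^sup>2)"
  shows "set_integrable lborel {s..t} (\<lambda>r. k r * u r)"
proof -
  obtain K where "K > 0" and K: "\<And>r. r \<in> {s..t} \<Longrightarrow> \<bar>k r\<bar> \<le> K"
    using compact_imp_bounded[OF compact_continuous_image[OF k compact_Icc]]
    unfolding bounded_pos by force
  show ?thesis
  proof (rule set_integrable_bound[where f = "\<lambda>r. K + K * (u r)\<^sup>2"])
    show "set_integrable lborel {s..t} (\<lambda>r. K + K * (u r)\<^sup>2)"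
      by (rule set_integral_add(1)[OF borel_integrable_atLeastAtMost' set_integrable_mult_right[OF u2]])
        auto
    have "set_borel_measurable lborel {s..t} k"
      using set_measurable_continuous_on[OF _ k] by (simp add: set_borel_measurable_def)
    then show "set_borel_measurable lborel {s..t} (\<lambda>r. k r * u r)"
      by (rule set_borel_measurable_times[OF _ u])
    show "AE r in lborel. r \<in> {s..t} \<longrightarrow> norm (k r * u r) \<le> norm (K + K * (u r)\<^sup>2)"
    proof (rule AE_I2, rule impI)
      fix r assume "r \<in> {s..t}"
      have "\<bar>u r\<bar> \<le> 1 + (u r)\<^sup>2"
        using zero_le_power2[of "\<bar>u r\<bar> - 1"] by (simp add: power2_eq_square algebra_simps)
      then have "\<bar>k r\<bar> * \<bar>u r\<bar> \<le> K * (1 + (u r)\<^sup>2)"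
        using K[OF \<open>r \<in> {s..t}\<close>] \<open>K > 0\<close> by (intro mult_mono) auto
      moreover have "norm (K + K * (u r)\<^sup>2) = K * (1 + (u r)\<^sup>2)"
        using \<open>K > 0\<close> by (simp add: algebra_simps)
      ultimately show "norm (k r * u r) \<le> norm (K + K * (u r)\<^sup>2)"
        by (metis abs_mult real_norm_def)
    qed
  qed
qed

lemma admissible_control_integral_form:
  fixes N \<beta> \<mu> \<gamma> a T :: real and \<psi> u :: "real \<Rightarrow> real"
  assumes \<psi>: "continuous_on {0..T} \<psi>" and adm: "admissible_control N \<beta> \<mu> \<gamma> a T \<psi> u"
  defines "h \<equiv> \<lambda>r. \<psi> r * (\<beta> * N - \<mu> - \<gamma> - \<beta> * \<psi> r) + \<psi> r * (N - \<psi> r) * u r"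
  shows "h absolutely_integrable_on {0..T}"
    and "\<And>t. t \<in> {0..T} \<Longrightarrow> \<psi> t = a + integral {0..t} h"
proof -
  have u: "set_borel_measurable lborel {0..T} u"
    and u2: "set_integrable lborel {0..T} (\<lambda>s. (u s)\<^sup>2)"
    and eq: "\<And>t. t \<in> {0..T} \<Longrightarrow> \<psi> t = a
        + (LINT s:{0..t}|lborel. \<psi> s * (\<beta> * N - \<mu> - \<gamma> - \<beta> * \<psi> s))
        + (LINT s:{0..t}|lborel. \<psi> s * (N - \<psi> s) * u s)"
    using adm unfolding admissible_control_def by auto
  have drift: "set_integrable lborel {0..T} (\<lambda>s. \<psi> s * (\<beta> * N - \<mu> - \<gamma> - \<beta> * \<psi> s))"
    using \<psi> by (intro borel_integrable_atLeastAtMost' continuous_intros)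
  have "continuous_on {0..T} (\<lambda>s. \<psi> s * (N - \<psi> s))" using \<psi> by (intro continuous_intros)
  then have noise: "set_integrable lborel {0..T} (\<lambda>s. \<psi> s * (N - \<psi> s) * u s)"
    using set_integrable_continuous_times_square_integrable[OF _ u u2] by blast
  have "set_integrable lborel {0..T} h"
    unfolding h_def by (rule set_integral_add(1)[OF drift noise])
  then show "h absolutely_integrable_on {0..T}"
    by (rule set_integrable_lborel_imp_absolutely_integrable)
  fix t assume t: "t \<in> {0..T}"
  have sub: "set_integrable lborel {0..t} f" if "set_integrable lborel {0..T} f" for f :: "real \<Rightarrow> real"
    by (rule set_integrable_subset[OF that]) (use t in auto)
  show "\<psi> t = a + integral {0..t} h"
    using eq[OF t] set_borel_integral_eq_integral[OF sub[OF drift]]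
      set_borel_integral_eq_integral[OF sub[OF noise]]
    by (simp add: h_def integral_add)
qed

section \<open>Calibration\<close>

lemma completing_the_square:
  fixes b F \<sigma> c u :: real
  assumes "\<sigma> \<noteq> 0" "F\<^sup>2 = b\<^sup>2 + 2 * c * \<sigma>\<^sup>2"
  shows "(1/2) * u\<^sup>2 + (b + F) / \<sigma>\<^sup>2 * (b + \<sigma> * u) + c = (\<sigma> * u + b + F)\<^sup>2 / (2 * \<sigma>\<^sup>2)"
proof -
  have "c = (F\<^sup>2 - b\<^sup>2) / (2 * \<sigma>\<^sup>2)" using assms by (simp add: field_simps)
  then show ?thesis using assms(1) by (simp add: field_simps power2_eq_square)
qed

locale calibration =
  fixes N \<beta> \<mu> \<gamma> \<rho> a c :: real and F :: "real \<Rightarrow> real"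
  assumes \<rho>_less_a: "\<rho> < a"
    and diffusion_pos: "\<And>x. x \<in> {\<rho>..a} \<Longrightarrow> x * (N - x) > 0"
    and F_cont: "continuous_on {\<rho>..a} F"
    and F_sq: "\<And>x. x \<in> {\<rho>..a} \<Longrightarrow>
                 (F x)\<^sup>2 = (x * (\<beta> * N - \<mu> - \<gamma> - \<beta> * x))\<^sup>2 + 2 * c * (x * (N - x))\<^sup>2"
begin

abbreviation drift :: "real \<Rightarrow> real" where
  "drift x \<equiv> x * (\<beta> * N - \<mu> - \<gamma> - \<beta> * x)"

abbreviation diffusion :: "real \<Rightarrow> real" where
  "diffusion x \<equiv> x * (N - x)"

definition potential_deriv :: "real \<Rightarrow> real" where
  "potential_deriv x = (drift x + F x) / (diffusion x)\<^sup>2"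

definition potential :: "real \<Rightarrow> real" where
  "potential x = integral {\<rho>..x} potential_deriv"

definition optimal_control :: "(real \<Rightarrow> real) \<Rightarrow> real \<Rightarrow> real" where
  "optimal_control \<phi> r = - (drift (\<phi> r) + F (\<phi> r)) / diffusion (\<phi> r)"

lemma potential_deriv_cont: "continuous_on {\<rho>..a} potential_deriv"
proof -
  have "x \<noteq> 0 \<and> x \<noteq> N" if "x \<in> {\<rho>..a}" for x
    using diffusion_pos[OF that] by auto
  then show ?thesis
    unfolding potential_deriv_def[abs_def] using F_cont by (intro continuous_intros) force+
qed

lemma potential_has_derivative:
  "x \<in> {\<rho>..a} \<Longrightarrow> (potential has_real_derivative potential_deriv x) (at x within {\<rho>..a})"
  unfolding potential_def by (rule integral_has_real_derivative[OF potential_deriv_cont])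

lemma running_cost_ge:
  assumes "x \<in> {\<rho>..a}"
  shows "- (potential_deriv x * (drift x + diffusion x * v)) - c \<le> (1/2) * v\<^sup>2"
proof -
  have "(1/2) * v\<^sup>2 + potential_deriv x * (drift x + diffusion x * v) + c
        = (diffusion x * v + drift x + F x)\<^sup>2 / (2 * (diffusion x)\<^sup>2)"
    unfolding potential_deriv_def
    by (rule completing_the_square) (use diffusion_pos[OF assms] F_sq[OF assms] in auto)
  also have "\<dots> \<ge> 0" by simp
  finally show ?thesis by simp
qed

lemma running_cost_optimal:
  assumes "x \<in> {\<rho>..a}" and v: "diffusion x * v = - (drift x + F x)"
  shows "- (potential_deriv x * (drift x + diffusion x * v)) - c = (1/2) * v\<^sup>2"
proof -
  have "(1/2) * v\<^sup>2 + potential_deriv x * (drift x + diffusion x * v) + c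
        = (diffusion x * v + drift x + F x)\<^sup>2 / (2 * (diffusion x)\<^sup>2)"
    unfolding potential_deriv_def
    by (rule completing_the_square) (use diffusion_pos[OF assms(1)] F_sq[OF assms(1)] in auto)
  also have "\<dots> = 0" using v by simp
  finally show ?thesis by simp
qed

lemma potential_drop_along_path:
  assumes "s \<le> t" and \<psi>: "continuous_on {s..t} \<psi>" and range: "\<And>r. r \<in> {s..t} \<Longrightarrow> \<psi> r \<in> {\<rho>..a}"
    and h: "h absolutely_integrable_on {s..t}"
    and \<psi>_eq: "\<And>r. r \<in> {s..t} \<Longrightarrow> \<psi> r = \<psi> s + integral {s..r} h"
  shows "(\<lambda>r. - (potential_deriv (\<psi> r) * h r) - c) integrable_on {s..t}"
    and "potential (\<psi> s) - potential (\<psi> t) - c * (t - s)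
         = integral {s..t} (\<lambda>r. - (potential_deriv (\<psi> r) * h r) - c)"
proof -
  have "continuous_on {s..t} (\<lambda>r. potential_deriv (\<psi> r))"
    using continuous_on_compose2[OF potential_deriv_cont \<psi>] range by blast
  then have gh: "(\<lambda>r. potential_deriv (\<psi> r) * h r) integrable_on {s..t}"
    using continuous_times_absolutely_integrable[OF _ h] set_lebesgue_integral_eq_integral(1) by blast
  then show "(\<lambda>r. - (potential_deriv (\<psi> r) * h r) - c) integrable_on {s..t}"
    by (intro integrable_diff integrable_neg) auto
  have "potential (\<psi> t) - potential (\<psi> s) = integral {s..t} (\<lambda>r. potential_deriv (\<psi> r) * h r)"
    by (rule chain_rule_indefinite_integral[OF \<open>s \<le> t\<close> \<psi> range h \<psi>_eq
          potential_has_derivative potential_deriv_cont])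
  then show "potential (\<psi> s) - potential (\<psi> t) - c * (t - s)
      = integral {s..t} (\<lambda>r. - (potential_deriv (\<psi> r) * h r) - c)"
    using gh \<open>s \<le> t\<close> by (subst integral_diff) (auto simp: integral_neg intro: integrable_neg)
qed

lemma cost_lower_bound:
  assumes "c \<ge> 0" "0 < T" "T \<le> m" and \<psi>: "continuous_on {0..T} \<psi>" and "\<psi> T = \<rho>"
    and adm: "admissible_control N \<beta> \<mu> \<gamma> a T \<psi> u"
  shows "potential a - potential \<rho> - c * m \<le> (1/2) * (LINT s:{0..T}|lborel. (u s)\<^sup>2)"
proof -
  define h where "h = (\<lambda>r. drift (\<psi> r) + diffusion (\<psi> r) * u r)"
  have h: "h absolutely_integrable_on {0..T}"
    and \<psi>_eq: "\<And>t. t \<in> {0..T} \<Longrightarrow> \<psi> t = a + integral {0..t} h"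
    using admissible_control_integral_form[OF \<psi> adm] unfolding h_def by auto
  have "\<psi> 0 = a" using \<psi>_eq[of 0] \<open>0 < T\<close> by simp
  obtain s \<tau> where "0 \<le> s" "s < \<tau>" "\<tau> \<le> T" "\<psi> s = a" "\<psi> \<tau> = \<rho>"
    and range: "\<And>r. r \<in> {s..\<tau>} \<Longrightarrow> \<psi> r \<in> {\<rho>..a}"
    using crossing_interval[OF _ \<psi> \<open>\<psi> 0 = a\<close> \<open>\<psi> T = \<rho>\<close> \<rho>_less_a] \<open>0 < T\<close> by auto
  have sub: "{s..\<tau>} \<subseteq> {0..T}" using \<open>0 \<le> s\<close> \<open>\<tau> \<le> T\<close> by auto
  have "h integrable_on {0..T}" using h by (simp add: absolutely_integrable_on_def)
  then have "\<psi> r = \<psi> s + integral {s..r} h" if "r \<in> {s..\<tau>}" for r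
    using \<psi>_eq[of r] \<psi>_eq[of s] integral_combine_within[of h 0 T s r] that sub \<open>0 \<le> s\<close> by auto
  note drop = potential_drop_along_path[OF less_imp_le[OF \<open>s < \<tau>\<close>] continuous_on_subset[OF \<psi> sub]
      range absolutely_integrable_on_subinterval[OF h sub] this]
  have u2: "(\<lambda>r. (u r)\<^sup>2) integrable_on {0..T}"
    "(LINT s:{0..T}|lborel. (u s)\<^sup>2) = integral {0..T} (\<lambda>r. (u r)\<^sup>2)"
    using set_borel_integral_eq_integral[of "{0..T}" "\<lambda>r. (u r)\<^sup>2"] adm
    unfolding admissible_control_def by auto
  have "potential a - potential \<rho> - c * (\<tau> - s)
        = integral {s..\<tau>} (\<lambda>r. - (potential_deriv (\<psi> r) * h r) - c)"
    using drop(2) \<open>\<psi> s = a\<close> \<open>\<psi> \<tau> = \<rho>\<close> by simp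
  also have "\<dots> \<le> integral {s..\<tau>} (\<lambda>r. (1/2) * (u r)\<^sup>2)"
    using running_cost_ge range drop(1) integrable_subinterval_real[OF u2(1) sub]
    by (intro integral_le) (auto simp: h_def)
  also have "\<dots> \<le> integral {0..T} (\<lambda>r. (1/2) * (u r)\<^sup>2)"
    using u2(1) integrable_subinterval_real[OF u2(1) sub] sub
    by (intro integral_subset_le) auto
  finally show ?thesis
    using u2(2) \<open>c \<ge> 0\<close> mult_left_mono[of "\<tau> - s" m c] \<open>0 \<le> s\<close> \<open>\<tau> \<le> T\<close> \<open>T \<le> m\<close> by simp
qed

lemma optimal_control_velocity:
  assumes "\<phi> r \<in> {\<rho>..a}"
  shows "drift (\<phi> r) + diffusion (\<phi> r) * optimal_control \<phi> r = - F (\<phi> r)"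
proof -
  have "diffusion (\<phi> r) \<noteq> 0" using diffusion_pos[OF assms] by linarith
  then show ?thesis by (simp add: optimal_control_def)
qed

lemma optimal_control_cont:
  assumes \<phi>: "continuous_on {0..T} \<phi>" and range: "\<And>t. t \<in> {0..T} \<Longrightarrow> \<phi> t \<in> {\<rho>..a}"
  shows "continuous_on {0..T} (optimal_control \<phi>)"
proof -
  have "continuous_on {0..T} (\<lambda>r. F (\<phi> r))"
    using continuous_on_compose2[OF F_cont \<phi>] range by blast
  moreover have "diffusion (\<phi> r) \<noteq> 0" if "r \<in> {0..T}" for r
    using diffusion_pos[OF range[OF that]] by linarith
  ultimately show ?thesis
    unfolding optimal_control_def[abs_def] using \<phi> by (intro continuous_intros) auto
qed

lemma optimal_control_admissible:
  assumes \<phi>: "continuous_on {0..T} \<phi>" and range: "\<And>t. t \<in> {0..T} \<Longrightarrow> \<phi> t \<in> {\<rho>..a}"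
    and ode: "\<And>t. t \<in> {0..T} \<Longrightarrow> ((\<lambda>r. - F (\<phi> r)) has_integral (\<phi> t - a)) {0..t}"
  shows "admissible_control N \<beta> \<mu> \<gamma> a T \<phi> (optimal_control \<phi>)"
  unfolding admissible_control_def
proof (intro conjI ballI)
  note u = optimal_control_cont[OF \<phi> range]
  show "set_borel_measurable lborel {0..T} (optimal_control \<phi>)"
    using set_measurable_continuous_on[OF _ u] by (simp add: set_borel_measurable_def)
  show "set_integrable lborel {0..T} (\<lambda>s. (optimal_control \<phi> s)\<^sup>2)"
    using u by (intro borel_integrable_atLeastAtMost' continuous_intros)
  fix t assume t: "t \<in> {0..T}"
  have "continuous_on {0..t} \<phi>" "continuous_on {0..t} (optimal_control \<phi>)"
    using \<phi> u t by (auto intro: continuous_on_subset)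
  then have drift: "continuous_on {0..t} (\<lambda>s. drift (\<phi> s))"
    and noise: "continuous_on {0..t} (\<lambda>s. diffusion (\<phi> s) * optimal_control \<phi> s)"
    by (auto intro!: continuous_intros)
  have "(LINT s:{0..t}|lborel. drift (\<phi> s)) + (LINT s:{0..t}|lborel. diffusion (\<phi> s) * optimal_control \<phi> s)
        = integral {0..t} (\<lambda>s. drift (\<phi> s) + diffusion (\<phi> s) * optimal_control \<phi> s)"
    using set_borel_integral_eq_integral[OF borel_integrable_atLeastAtMost'[OF drift]]
      set_borel_integral_eq_integral[OF borel_integrable_atLeastAtMost'[OF noise]]
    by (simp add: integral_add)
  also have "\<dots> = integral {0..t} (\<lambda>r. - F (\<phi> r))"
    using optimal_control_velocity range t by (intro integral_cong) auto
  also have "\<dots> = \<phi> t - a" by (rule integral_unique[OF ode[OF t]])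
  finally show "\<phi> t = a + (LINT s:{0..t}|lborel. drift (\<phi> s))
      + (LINT s:{0..t}|lborel. diffusion (\<phi> s) * optimal_control \<phi> s)" by simp
qed

lemma optimal_control_cost:
  assumes "0 \<le> T" and \<phi>: "continuous_on {0..T} \<phi>" and range: "\<And>t. t \<in> {0..T} \<Longrightarrow> \<phi> t \<in> {\<rho>..a}"
    and ode: "\<And>t. t \<in> {0..T} \<Longrightarrow> ((\<lambda>r. - F (\<phi> r)) has_integral (\<phi> t - a)) {0..t}"
    and "\<phi> 0 = a" "\<phi> T = \<rho>"
  shows "(1/2) * (LINT s:{0..T}|lborel. (optimal_control \<phi> s)\<^sup>2) = potential a - potential \<rho> - c * T"
proof -
  define h where "h = (\<lambda>r. - F (\<phi> r))"
  have "continuous_on {0..T} (\<lambda>r. F (\<phi> r))"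
    using continuous_on_compose2[OF F_cont \<phi>] range by blast
  then have "h absolutely_integrable_on {0..T}"
    unfolding h_def by (intro absolutely_integrable_continuous_real continuous_intros)
  moreover have "\<phi> r = \<phi> 0 + integral {0..r} h" if "r \<in> {0..T}" for r
    using integral_unique[OF ode[OF that]] \<open>\<phi> 0 = a\<close> by (simp add: h_def)
  ultimately have drop: "potential a - potential \<rho> - c * T
      = integral {0..T} (\<lambda>r. - (potential_deriv (\<phi> r) * h r) - c)"
    using potential_drop_along_path(2)[OF \<open>0 \<le> T\<close> \<phi> range] \<open>\<phi> 0 = a\<close> \<open>\<phi> T = \<rho>\<close> by simp
  have pointwise: "(1/2) * (optimal_control \<phi> r)\<^sup>2 = - (potential_deriv (\<phi> r) * h r) - c"
    if "r \<in> {0..T}" for r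
  proof -
    have velocity: "drift (\<phi> r) + diffusion (\<phi> r) * optimal_control \<phi> r = - F (\<phi> r)"
      by (rule optimal_control_velocity) (rule range[OF that])
    have "- (potential_deriv (\<phi> r) * (drift (\<phi> r) + diffusion (\<phi> r) * optimal_control \<phi> r)) - c
          = (1/2) * (optimal_control \<phi> r)\<^sup>2"
      using velocity by (intro running_cost_optimal[OF range[OF that]]) linarith
    then show ?thesis by (simp only: velocity h_def)
  qed
  have "(1/2) * (LINT s:{0..T}|lborel. (optimal_control \<phi> s)\<^sup>2)
        = integral {0..T} (\<lambda>r. (1/2) * (optimal_control \<phi> r)\<^sup>2)"
    using set_borel_integral_eq_integral(2)[OF borel_integrable_atLeastAtMost'[of 0 T
        "\<lambda>r. (optimal_control \<phi> r)\<^sup>2"]] optimal_control_cont[OF \<phi> range]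
    by (simp add: continuous_intros)
  also have "\<dots> = integral {0..T} (\<lambda>r. - (potential_deriv (\<phi> r) * h r) - c)"
    by (rule integral_cong) (use pointwise in auto)
  finally show ?thesis using drop by simp
qed

lemma Vbar_eq_rate_fun:
  assumes "c \<ge> 0" "0 < T" "T \<le> m" "continuous_on {0..T} \<phi>" "\<phi> T = \<rho>"
    and adm: "admissible_control N \<beta> \<mu> \<gamma> a T \<phi> u"
    and cost: "(1/2) * (LINT s:{0..T}|lborel. (u s)\<^sup>2) = potential a - potential \<rho> - c * m"
  shows "Vbar N \<beta> \<mu> \<gamma> a m \<rho> = rate_fun N \<beta> \<mu> \<gamma> a T \<phi>"
proof (rule antisym)
  show "Vbar N \<beta> \<mu> \<gamma> a m \<rho> \<le> rate_fun N \<beta> \<mu> \<gamma> a T \<phi>"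
    unfolding Vbar_def using assms(2-5) by (intro Inf_lower) blast
  have "rate_fun N \<beta> \<mu> \<gamma> a T \<phi> \<le> ereal (potential a - potential \<rho> - c * m)"
    unfolding rate_fun_def using adm cost by (intro Inf_lower) force
  also have "\<dots> \<le> Vbar N \<beta> \<mu> \<gamma> a m \<rho>"
    unfolding Vbar_def rate_fun_def
    using cost_lower_bound[OF \<open>c \<ge> 0\<close>] by (auto intro!: Inf_greatest)
  finally show "rate_fun N \<beta> \<mu> \<gamma> a T \<phi> \<le> Vbar N \<beta> \<mu> \<gamma> a m \<rho>" .
qed

end

lemma optimal_exit_path:
  fixes N \<beta> \<mu> \<gamma> a m \<rho> :: real
  assumes "\<beta> > 0" "\<mu> > 0" "\<gamma> > 0" "0 < \<rho>" "\<rho> < a" "a < N - (\<mu> + \<gamma>) / \<beta>" "m > 0"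
  obtains T \<phi> where "0 < T" "T \<le> m" "continuous_on {0..T} \<phi>" "strict_antimono_on {0..T} \<phi>"
    "\<phi> T = \<rho>" "\<And>t. t \<in> {0..T} \<Longrightarrow> \<phi> t \<in> {\<rho>..a}"
    "Vbar N \<beta> \<mu> \<gamma> a m \<rho> = rate_fun N \<beta> \<mu> \<gamma> a T \<phi>"
proof -
  define b where "b = (\<lambda>x. x * (\<beta> * N - \<mu> - \<gamma> - \<beta> * x))"
  define \<sigma> where "\<sigma> = (\<lambda>x. x * (N - x))"
  have b_pos: "b x > 0" and \<sigma>_pos: "\<sigma> x > 0" if "x \<in> {\<rho>..a}" for x
  proof -
    have "\<beta> * a < \<beta> * N - \<mu> - \<gamma>" "0 < (\<mu> + \<gamma>) / \<beta>"
      using assms by (simp_all add: field_simps)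
    moreover have "\<beta> * x \<le> \<beta> * a" using that \<open>\<beta> > 0\<close> by simp
    ultimately have "0 < x" "0 < \<beta> * N - \<mu> - \<gamma> - \<beta> * x" "0 < N - x"
      using that assms by (auto simp only: atLeastAtMost_iff)
    then show "b x > 0" "\<sigma> x > 0" by (simp_all add: b_def \<sigma>_def)
  qed
  have b_cont: "continuous_on {\<rho>..a} b" and \<sigma>_cont: "continuous_on {\<rho>..a} \<sigma>"
    unfolding b_def \<sigma>_def by (intro continuous_intros)+
  obtain c where "c \<ge> 0" "travel_time b \<sigma> \<rho> a c \<le> m" "c = 0 \<or> travel_time b \<sigma> \<rho> a c = m"
    using exists_time_multiplier[OF \<open>\<rho> < a\<close> \<open>m > 0\<close> b_cont _ \<sigma>_cont] b_pos \<sigma>_pos by blast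
  define F where "F = (\<lambda>y. sqrt ((b y)\<^sup>2 + 2 * c * (\<sigma> y)\<^sup>2))"
  have F_cont: "continuous_on {\<rho>..a} F"
    unfolding F_def using b_cont \<sigma>_cont by (intro continuous_intros)
  have F_pos: "F y > 0" if "y \<in> {\<rho>..a}" for y
    using b_pos[OF that] \<open>c \<ge> 0\<close> by (simp add: F_def add_pos_nonneg)
  interpret calibration N \<beta> \<mu> \<gamma> \<rho> a c F
    using \<open>\<rho> < a\<close> \<sigma>_pos F_cont \<open>c \<ge> 0\<close> by unfold_locales (auto simp: F_def b_def \<sigma>_def)
  define T where "T = integral {\<rho>..a} (\<lambda>y. 1 / F y)"
  have T_travel: "T = travel_time b \<sigma> \<rho> a c" by (simp add: T_def F_def travel_time_def)
  obtain \<phi> where "0 < T" and \<phi>: "continuous_on {0..T} \<phi>" "\<phi> 0 = a" "\<phi> T = \<rho>"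
    and range: "\<And>t. t \<in> {0..T} \<Longrightarrow> \<phi> t \<in> {\<rho>..a}" and "strict_antimono_on {0..T} \<phi>"
    and ode: "\<And>t. t \<in> {0..T} \<Longrightarrow> ((\<lambda>r. - F (\<phi> r)) has_integral (\<phi> t - a)) {0..t}"
    using decreasing_solution_of_autonomous_ode[OF \<open>\<rho> < a\<close> F_cont F_pos] unfolding T_def by blast
  have "T \<le> m" and "c * T = c * m"
    using T_travel \<open>travel_time b \<sigma> \<rho> a c \<le> m\<close> \<open>c = 0 \<or> _\<close> by auto
  then have cost: "(1/2) * (LINT s:{0..T}|lborel. (optimal_control \<phi> s)\<^sup>2)
      = potential a - potential \<rho> - c * m"
    using optimal_control_cost[OF _ \<phi>(1) range ode \<phi>(2,3)] \<open>0 < T\<close> by simp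
  have "Vbar N \<beta> \<mu> \<gamma> a m \<rho> = rate_fun N \<beta> \<mu> \<gamma> a T \<phi>"
    by (rule Vbar_eq_rate_fun[OF \<open>c \<ge> 0\<close> \<open>0 < T\<close> \<open>T \<le> m\<close> \<phi>(1,3)
          optimal_control_admissible[OF \<phi>(1) range ode] cost])
  with that \<open>0 < T\<close> \<open>T \<le> m\<close> \<phi> range \<open>strict_antimono_on {0..T} \<phi>\<close> show ?thesis by blast
qed

text \<open>Any \<open>\<delta>1\<close> works, since the argument only needs \<open>\<rho> < * - \<delta>0 < *\<close>.\<close>

theorem lemma2:
  fixes N \<beta> \<mu> \<gamma> :: real
  assumes "N > 0" "\<beta> > 0" "\<mu> > 0" "\<gamma> > 0"
    and "\<beta> * N / (\<mu> + \<gamma>) > 1"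
  shows "\<exists>\<delta>1 > 0. \<forall>\<delta>0 m \<rho>. 0 < \<delta>0 \<and> \<delta>0 < \<delta>1 \<and> m > 0 \<and>
            0 < \<rho> \<and> \<rho> < (N - (\<mu> + \<gamma>) / \<beta>) - \<delta>0 \<and>
            Vbar N \<beta> \<mu> \<gamma> ((N - (\<mu> + \<gamma>) / \<beta>) - \<delta>0) m \<rho> < \<infinity> \<longrightarrow>
            (\<exists>T \<phi>. 0 < T \<and> T \<le> m \<and> continuous_on {0..T} \<phi> \<and>
               (\<forall>s\<in>{0..T}. \<forall>t\<in>{0..T}. s \<le> t \<longrightarrow> \<phi> t \<le> \<phi> s) \<and>
               \<phi> T = \<rho> \<and> (\<forall>t\<in>{0..<T}. \<phi> t \<noteq> \<rho>) \<and>
               Vbar N \<beta> \<mu> \<gamma> ((N - (\<mu> + \<gamma>) / \<beta>) - \<delta>0) m \<rho> =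
                 rate_fun N \<beta> \<mu> \<gamma> ((N - (\<mu> + \<gamma>) / \<beta>) - \<delta>0) T \<phi> \<and>
               (\<forall>t\<in>{0..T}. \<rho> \<le> \<phi> t \<and> \<phi> t \<le> (N - (\<mu> + \<gamma>) / \<beta>) - \<delta>0))"
proof (rule exI[of _ 1], intro conjI allI impI)
  fix \<delta>0 m \<rho> :: real
  let ?a = "N - (\<mu> + \<gamma>) / \<beta> - \<delta>0"
  assume "0 < \<delta>0 \<and> \<delta>0 < 1 \<and> m > 0 \<and> 0 < \<rho> \<and> \<rho> < ?a \<and> Vbar N \<beta> \<mu> \<gamma> ?a m \<rho> < \<infinity>"
  then have "0 < \<rho>" "\<rho> < ?a" "?a < N - (\<mu> + \<gamma>) / \<beta>" "m > 0" by auto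
  then obtain T \<phi> where "0 < T" "T \<le> m" "continuous_on {0..T} \<phi>"
    and decreasing: "strict_antimono_on {0..T} \<phi>" and "\<phi> T = \<rho>"
    and "\<And>t. t \<in> {0..T} \<Longrightarrow> \<phi> t \<in> {\<rho>..?a}"
    and "Vbar N \<beta> \<mu> \<gamma> ?a m \<rho> = rate_fun N \<beta> \<mu> \<gamma> ?a T \<phi>"
    using optimal_exit_path[OF \<open>\<beta> > 0\<close> \<open>\<mu> > 0\<close> \<open>\<gamma> > 0\<close>] by blast
  moreover have "\<phi> t \<le> \<phi> s" if "s \<in> {0..T}" "t \<in> {0..T}" "s \<le> t" for s t
    using monotone_onD[OF decreasing, of s t] that by (cases "s = t") auto
  moreover have "\<phi> t \<noteq> \<rho>" if "t \<in> {0..<T}" for t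
    using monotone_onD[OF decreasing, of t T] that \<open>\<phi> T = \<rho>\<close> by auto
  ultimately show "\<exists>T \<phi>. 0 < T \<and> T \<le> m \<and> continuous_on {0..T} \<phi> \<and>
               (\<forall>s\<in>{0..T}. \<forall>t\<in>{0..T}. s \<le> t \<longrightarrow> \<phi> t \<le> \<phi> s) \<and>
               \<phi> T = \<rho> \<and> (\<forall>t\<in>{0..<T}. \<phi> t \<noteq> \<rho>) \<and>
               Vbar N \<beta> \<mu> \<gamma> ?a m \<rho> = rate_fun N \<beta> \<mu> \<gamma> ?a T \<phi> \<and>
               (\<forall>t\<in>{0..T}. \<rho> \<le> \<phi> t \<and> \<phi> t \<le> ?a)"
    by (intro exI[of _ T] exI[of _ \<phi>]) auto
qed simp

end
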